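(* Consider a financial network (as described in the context) whose cross-holding graph is acyclic, and suppose one entry (edge weight) of the cross-holding matrix $C$ changes by at most $\epsilon$, producing a network whose cross-holding graph is also acyclic, with the asset holdings $D$ and asset prices $\vec p$ unchanged. Then no institution's market value changes by more than $\epsilon\|\vec p\|_1$.
   Context: Model: there are $n$ financial institutions and $m$ underlying assets; asset $k$ has price $p_k\ge 0$. $D_{ik}\ge 0$ is the fraction of asset $k$ owned by institution $i$ (so $\sum_i D_{ik}\le 1$ for each $k$). $C=(C_{ij})$ is an $n\times n$ nonnegative matrix, $C_{ij}$ being the fraction of institution $j$ owned by institution $i$, with $C_{ii}=0$. The self-holding of institution $j$ is $\hat C_{jj}=1-\sum_i C_{ij}$, assumed to satisfy $\hat C_{jj}>0$; $\hat C$ is the diagonal matrix with these entries. The equity valuation is $\vec V=(I-C)^{-1}D\vec p$ (the solution of $\vec V=D\vec p+C\vec V$), and the market valuation is $\vec v=\hat C\vec V=\hat C(I-C)^{-1}D\vec p$; $v_i$ is the market value of institution $i$. The cross-holding graph is the directed graph with an edge from $j$ to $i$ whenever $C_{ij}>0$. *)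

theory Defs
  imports "HOL-Analysis.Analysis"
begin

text \<open>C $ i $ j is the fraction of institution j owned by institution i;
  D $ i $ k is the fraction of asset k owned by institution i; p $ k is the price of asset k.\<close>

definition self_holding :: "real^'n^'n \<Rightarrow> 'n \<Rightarrow> real" where
  "self_holding C j = 1 - (\<Sum>i\<in>UNIV. C $ i $ j)"

definition self_holding_matrix :: "real^'n^'n \<Rightarrow> real^'n^'n" where
  "self_holding_matrix C = (\<chi> i j. if i = j then self_holding C j else 0)"

definition valid_crossholding :: "real^'n^'n \<Rightarrow> bool" where
  "valid_crossholding C \<longleftrightarrow>
     (\<forall>i j. 0 \<le> C $ i $ j) \<and> (\<forall>i. C $ i $ i = 0) \<and> (\<forall>j. self_holding C j > 0)"

definition valid_holdings :: "real^'m^'n \<Rightarrow> bool" where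
  "valid_holdings D \<longleftrightarrow> (\<forall>i k. 0 \<le> D $ i $ k) \<and> (\<forall>k. (\<Sum>i\<in>UNIV. D $ i $ k) \<le> 1)"

definition crossholding_graph :: "real^'n^'n \<Rightarrow> ('n \<times> 'n) set" where
  "crossholding_graph C = {(j, i). C $ i $ j > 0}"

definition equity_value :: "real^'n^'n \<Rightarrow> real^'m^'n \<Rightarrow> real^'m \<Rightarrow> real^'n" where
  "equity_value C D p = matrix_inv (mat 1 - C) *v (D *v p)"

definition market_value :: "real^'n^'n \<Rightarrow> real^'m^'n \<Rightarrow> real^'m \<Rightarrow> real^'n" where
  "market_value C D p = self_holding_matrix C *v equity_value C D p"

definition norm1 :: "real^'m \<Rightarrow> real" where
  "norm1 p = (\<Sum>k\<in>UNIV. \<bar>p $ k\<bar>)"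

end

theory Submission
  imports Defs
begin

text \<open>Write L = (I - C)^-1, V and v for equity and market values, and d = C'(a,b) - C(a,b).
  Changing one entry is a rank-one perturbation: (I - C')(V' - V) = d V(b) e(a), so
  V' - V = d V(b) L' e(a), and together with the change of the self-holding of b this gives
  v'(i) - v(i) = d V(b) (s'(i) L'(i,a) - [i = b]), where s' are the self-holdings of C'.
  The column sums of I - C are the self-holdings, so diag(s) L has column sums 1; in an acyclic
  network the entries of L lie in [0, 1] (induction along the graph, starting at its sinks).
  Hence the bracket has absolute value at most 1, and V(b) is at most the total asset value
  of D p, which is at most the 1-norm of p.\<close>

lemma matrix_inv_mult:
  fixes A :: "'a::semiring_1^'n^'m"
  assumes "invertible A"
  shows "A ** matrix_inv A = mat 1" and "matrix_inv A ** A = mat 1"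
proof -
  have "A ** matrix_inv A = mat 1 \<and> matrix_inv A ** A = mat 1"
    unfolding matrix_inv_def by (rule someI_ex) (use assms invertible_def in blast)
  then show "A ** matrix_inv A = mat 1" and "matrix_inv A ** A = mat 1" by auto
qed

lemma matrix_vector_mult_axis_component:
  fixes A :: "'a::semiring_1^'n^'m"
  shows "(A *v axis j 1) $ i = A $ i $ j"
  by (simp add: matrix_vector_mult_def axis_def if_distrib[of "\<lambda>x. _ * x"] cong: if_cong)

lemma mat1_minus_mult_component:
  fixes C :: "'a::comm_ring_1^'n^'n"
  shows "((mat 1 - C) *v y) $ i = y $ i - (\<Sum>j\<in>UNIV. C $ i $ j * y $ j)"
  by (simp add: matrix_vector_mult_diff_rdistrib) (simp add: matrix_vector_mult_def)

lemma vector_mult_mat1_minus_component: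
  fixes C :: "'a::comm_ring_1^'n^'n"
  shows "(h v* (mat 1 - C)) $ j = h $ j - (\<Sum>i\<in>UNIV. h $ i * C $ i $ j)"
proof -
  have "(h v* mat 1) $ j = h $ j" by simp
  then show ?thesis
    unfolding vector_matrix_mult_def by (simp add: right_diff_distrib sum_subtractf)
qed

lemma sum_mat1_minus_mult:
  fixes C :: "real^'n^'n"
  shows "(\<Sum>i\<in>UNIV. ((mat 1 - C) *v y) $ i) = (\<Sum>j\<in>UNIV. self_holding C j * y $ j)"
proof -
  have "(\<Sum>i\<in>UNIV. \<Sum>j\<in>UNIV. C $ i $ j * y $ j) = (\<Sum>j\<in>UNIV. (\<Sum>i\<in>UNIV. C $ i $ j) * y $ j)"
    by (subst sum.swap) (simp add: sum_distrib_right)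
  then show ?thesis
    by (simp add: mat1_minus_mult_component sum_subtractf self_holding_def left_diff_distrib)
qed

lemma valid_crossholding_invertible:
  fixes C :: "real^'n^'n"
  assumes C: "valid_crossholding C"
  shows "invertible (mat 1 - C)"
proof -
  have "y = 0" if ker: "(mat 1 - C) *v y = 0" for y :: "real^'n"
  proof -
    define w :: "real^'n" where "w = (\<chi> j. \<bar>y $ j\<bar>)"
    have "w $ i \<le> (\<Sum>j\<in>UNIV. C $ i $ j * w $ j)" for i
    proof -
      have "\<bar>y $ i\<bar> = \<bar>\<Sum>j\<in>UNIV. C $ i $ j * y $ j\<bar>"
        using ker mat1_minus_mult_component[of C y i] by simp
      also have "\<dots> \<le> (\<Sum>j\<in>UNIV. C $ i $ j * \<bar>y $ j\<bar>)"
        using C sum_abs[of "\<lambda>j. C $ i $ j * y $ j" UNIV]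
        by (simp add: valid_crossholding_def abs_mult)
      finally show ?thesis by (simp add: w_def)
    qed
    \<comment> \<open>summing w \<le> C w over all rows leaves the self-holdings as weights\<close>
    then have "(\<Sum>j\<in>UNIV. self_holding C j * w $ j) \<le> 0"
      unfolding sum_mat1_minus_mult[symmetric]
      by (intro sum_nonpos) (simp add: mat1_minus_mult_component)
    moreover have nonneg: "0 \<le> self_holding C j * w $ j" for j
      using C by (simp add: valid_crossholding_def w_def less_imp_le)
    ultimately have "(\<Sum>j\<in>UNIV. self_holding C j * w $ j) = 0"
      by (simp add: order_antisym sum_nonneg)
    then have "self_holding C j * w $ j = 0" for j
      using nonneg by (simp add: sum_nonneg_eq_0_iff)
    then show "y = 0"
      using C by (simp add: vec_eq_iff w_def valid_crossholding_def less_le)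
  qed
  then show ?thesis
    by (simp add: invertible_left_inverse matrix_left_invertible_ker)
qed

lemma equity_value_equation:
  assumes "valid_crossholding C"
  shows "(mat 1 - C) *v equity_value C D p = D *v p"
  unfolding equity_value_def
  by (metis matrix_vector_mul_assoc matrix_vector_mul_lid
      matrix_inv_mult(1)[OF valid_crossholding_invertible[OF assms]])

lemma market_value_component:
  "market_value C D p $ i = self_holding C i * equity_value C D p $ i"
proof -
  have "market_value C D p $ i =
      (\<Sum>j\<in>UNIV. if i = j then self_holding C j * equity_value C D p $ j else 0)"
    unfolding market_value_def self_holding_matrix_def matrix_vector_mult_def
    by (simp add: if_distrib[of "\<lambda>x. x * _"] cong: if_cong)
  then show ?thesis by simp
qed

lemma crossholding_zero_off_graph:
  assumes "valid_crossholding C" and "(j, i) \<notin> crossholding_graph C"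
  shows "C $ i $ j = 0"
  using assms by (simp add: valid_crossholding_def crossholding_graph_def not_less order_antisym)

lemma unit_left_solution_component:
  fixes C :: "real^'n^'n"
  assumes "h v* (mat 1 - C) = axis b 1"
  shows "h $ j = (if j = b then 1 else 0) + (\<Sum>i\<in>UNIV. h $ i * C $ i $ j)"
  using vector_mult_mat1_minus_component[of h C j] assms by (simp add: axis_def)

lemma unit_left_solution_zero_off_ancestors:
  fixes C :: "real^'n^'n"
  assumes C: "valid_crossholding C" and acyc: "acyclic (crossholding_graph C)"
    and h: "h v* (mat 1 - C) = axis b 1"
  shows "(j, b) \<notin> (crossholding_graph C)\<^sup>* \<Longrightarrow> h $ j = 0"
proof (induction j rule: wf_induct_rule[OF finite_acyclic_wf_converse[OF _ acyc]])
  case (2 j)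
  have "h $ i * C $ i $ j = 0" for i
  proof (cases "(j, i) \<in> crossholding_graph C")
    case True
    then have "(i, b) \<notin> (crossholding_graph C)\<^sup>*"
      using "2.prems" by (meson converse_rtrancl_into_rtrancl)
    then show ?thesis using "2.IH" True by simp
  next
    case False
    then show ?thesis using crossholding_zero_off_graph[OF C] by simp
  qed
  moreover have "j \<noteq> b" using "2.prems" by auto
  ultimately show ?case using unit_left_solution_component[OF h, of j] by (simp add: sum.neutral)
qed simp

lemma unit_left_solution_bounds:
  fixes C :: "real^'n^'n"
  assumes C: "valid_crossholding C" and acyc: "acyclic (crossholding_graph C)"
    and h: "h v* (mat 1 - C) = axis b 1"
  shows "0 \<le> h $ j \<and> h $ j \<le> 1"
proof (induction j rule: wf_induct_rule[OF finite_acyclic_wf_converse[OF _ acyc]])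
  case (2 j)
  show ?case
  proof (cases "j = b")
    case True
    have "h $ i * C $ i $ b = 0" for i
    proof (cases "(b, i) \<in> crossholding_graph C")
      case True
      then have "(i, b) \<notin> (crossholding_graph C)\<^sup>*"
        using acyc by (meson acyclic_def rtrancl_into_trancl2)
      then show ?thesis using unit_left_solution_zero_off_ancestors[OF C acyc h] by simp
    next
      case False
      then show ?thesis using crossholding_zero_off_graph[OF C] by simp
    qed
    then show ?thesis using unit_left_solution_component[OF h, of j] True by (simp add: sum.neutral)
  next
    case False
    have term_bounds: "0 \<le> h $ i * C $ i $ j \<and> h $ i * C $ i $ j \<le> C $ i $ j" for i
    proof (cases "(j, i) \<in> crossholding_graph C")
      case True
      then show ?thesis
        using "2.IH" C by (simp add: valid_crossholding_def mult_left_le_one_le)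
    next
      case False
      then show ?thesis using crossholding_zero_off_graph[OF C] by simp
    qed
    have "(\<Sum>i\<in>UNIV. h $ i * C $ i $ j) \<le> (\<Sum>i\<in>UNIV. C $ i $ j)"
      using term_bounds by (intro sum_mono) auto
    also have "\<dots> \<le> 1"
      using C by (simp add: valid_crossholding_def self_holding_def less_imp_le)
    finally show ?thesis
      using unit_left_solution_component[OF h, of j] False term_bounds by (simp add: sum_nonneg)
  qed
qed simp

lemma leontief_inverse_bounds:
  fixes C :: "real^'n^'n"
  assumes C: "valid_crossholding C" and acyc: "acyclic (crossholding_graph C)"
  shows "0 \<le> matrix_inv (mat 1 - C) $ i $ j \<and> matrix_inv (mat 1 - C) $ i $ j \<le> 1"
proof -
  have "matrix_inv (mat 1 - C) $ i v* (mat 1 - C) = (matrix_inv (mat 1 - C) ** (mat 1 - C)) $ i"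
    by (simp add: vec_eq_iff matrix_matrix_mult_def vector_matrix_mult_def mult.commute)
  also have "\<dots> = axis i 1"
    unfolding matrix_inv_mult(2)[OF valid_crossholding_invertible[OF C]]
    by (simp add: vec_eq_iff mat_def axis_def)
  finally show ?thesis by (rule unit_left_solution_bounds[OF C acyc])
qed

lemma holdings_value_nonneg:
  assumes "valid_holdings D" and "\<forall>k. 0 \<le> p $ k"
  shows "0 \<le> (D *v p) $ i"
  using assms by (simp add: valid_holdings_def matrix_vector_mult_def sum_nonneg)

lemma sum_holdings_value_le_norm1:
  assumes D: "valid_holdings D" and p: "\<forall>k. 0 \<le> p $ k"
  shows "(\<Sum>i\<in>UNIV. (D *v p) $ i) \<le> norm1 p"
proof -
  have "(\<Sum>i\<in>UNIV. (D *v p) $ i) = (\<Sum>k\<in>UNIV. (\<Sum>i\<in>UNIV. D $ i $ k) * p $ k)"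
    by (simp add: matrix_vector_mult_def sum_distrib_right) (rule sum.swap)
  also have "\<dots> \<le> (\<Sum>k\<in>UNIV. p $ k)"
    using D p unfolding valid_holdings_def
    by (intro sum_mono) (simp add: mult_left_le_one_le sum_nonneg)
  finally show ?thesis using p by (simp add: norm1_def)
qed

lemma equity_value_bounds:
  assumes C: "valid_crossholding C" and acyc: "acyclic (crossholding_graph C)"
    and D: "valid_holdings D" and p: "\<forall>k. 0 \<le> p $ k"
  shows "0 \<le> equity_value C D p $ i \<and> equity_value C D p $ i \<le> norm1 p"
proof -
  let ?L = "matrix_inv (mat 1 - C)"
  have V: "equity_value C D p $ i = (\<Sum>j\<in>UNIV. ?L $ i $ j * (D *v p) $ j)"
    by (simp add: equity_value_def matrix_vector_mult_def)
  have "0 \<le> (\<Sum>j\<in>UNIV. ?L $ i $ j * (D *v p) $ j)"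
    using leontief_inverse_bounds[OF C acyc] holdings_value_nonneg[OF D p]
    by (simp add: sum_nonneg)
  moreover have "(\<Sum>j\<in>UNIV. ?L $ i $ j * (D *v p) $ j) \<le> (\<Sum>j\<in>UNIV. (D *v p) $ j)"
    using leontief_inverse_bounds[OF C acyc] holdings_value_nonneg[OF D p]
    by (intro sum_mono) (simp add: mult_left_le_one_le)
  ultimately show ?thesis using V sum_holdings_value_le_norm1[OF D p] by linarith
qed

lemma self_holding_mult_leontief_bounds:
  assumes C: "valid_crossholding C" and acyc: "acyclic (crossholding_graph C)"
  shows "0 \<le> self_holding C i * matrix_inv (mat 1 - C) $ i $ a
    \<and> self_holding C i * matrix_inv (mat 1 - C) $ i $ a \<le> 1"
proof -
  let ?L = "matrix_inv (mat 1 - C)"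
  define z where "z = ?L *v axis a 1"
  have z: "z $ k = ?L $ k $ a" for k
    by (simp add: z_def matrix_vector_mult_axis_component)
  have "(mat 1 - C) *v z = axis a 1"
    unfolding z_def matrix_vector_mul_assoc
    by (simp add: matrix_inv_mult(1)[OF valid_crossholding_invertible[OF C]])
  then have "(\<Sum>k\<in>UNIV. self_holding C k * z $ k) = 1"
    using sum_mat1_minus_mult[of C z] by (simp add: axis_def)
  moreover have nonneg: "0 \<le> self_holding C k * z $ k" for k
    using C leontief_inverse_bounds[OF C acyc] by (simp add: z valid_crossholding_def less_imp_le)
  ultimately have "self_holding C i * z $ i \<le> 1"
    using member_le_sum[of i UNIV "\<lambda>k. self_holding C k * z $ k"] by simp
  then show ?thesis using nonneg[of i] by (simp add: z)
qed

lemma self_holding_single_entry_change: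
  assumes "\<forall>i j. (i, j) \<noteq> (a, b) \<longrightarrow> C' $ i $ j = C $ i $ j"
  shows "self_holding C' k = self_holding C k - (if k = b then C' $ a $ b - C $ a $ b else 0)"
proof -
  have "(\<Sum>i\<in>UNIV. C' $ i $ k - C $ i $ k)
      = (\<Sum>i\<in>UNIV. if i = a \<and> k = b then C' $ a $ b - C $ a $ b else 0)"
    using assms by (intro sum.cong) auto
  then show ?thesis by (cases "k = b") (auto simp: self_holding_def sum_subtractf)
qed

lemma equity_value_single_entry_change:
  assumes C: "valid_crossholding C" and C': "valid_crossholding C'"
    and same: "\<forall>i j. (i, j) \<noteq> (a, b) \<longrightarrow> C' $ i $ j = C $ i $ j"
  shows "equity_value C' D p $ i = equity_value C D p $ i
    + (C' $ a $ b - C $ a $ b) * equity_value C D p $ b * matrix_inv (mat 1 - C') $ i $ a"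
proof -
  define V where "V = equity_value C D p"
  define V' where "V' = equity_value C' D p"
  define s where "s = (C' $ a $ b - C $ a $ b) * V $ b"
  have "((mat 1 - C') *v (V' - V)) $ k = (s *s axis a 1) $ k" for k
  proof -
    have "((mat 1 - C') *v (V' - V)) $ k
        = ((mat 1 - C') *v V') $ k - ((mat 1 - C) *v V) $ k
          + (\<Sum>j\<in>UNIV. (C' $ k $ j - C $ k $ j) * V $ j)"
      by (simp add: mat1_minus_mult_component right_diff_distrib left_diff_distrib sum_subtractf)
    also have "\<dots> = (\<Sum>j\<in>UNIV. (C' $ k $ j - C $ k $ j) * V $ j)"
      by (simp add: V_def V'_def equity_value_equation[OF C] equity_value_equation[OF C'])
    also have "\<dots> = (\<Sum>j\<in>UNIV. if k = a \<and> j = b then s else 0)"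
      using same by (intro sum.cong) (auto simp: s_def)
    finally show ?thesis by (simp add: axis_def)
  qed
  then have "V' - V = matrix_inv (mat 1 - C') *v (s *s axis a 1)"
    by (metis vec_eq_iff matrix_vector_mul_assoc matrix_vector_mul_lid
        matrix_inv_mult(2)[OF valid_crossholding_invertible[OF C']])
  then have "V' $ i - V $ i = s * matrix_inv (mat 1 - C') $ i $ a"
    by (metis vector_scalar_commute vector_smult_component vector_minus_component
        matrix_vector_mult_axis_component)
  then show ?thesis by (simp add: V_def V'_def s_def)
qed

lemma market_value_single_entry_change:
  assumes "valid_crossholding C" and "valid_crossholding C'"
    and "\<forall>i j. (i, j) \<noteq> (a, b) \<longrightarrow> C' $ i $ j = C $ i $ j"
  shows "market_value C' D p $ i - market_value C D p $ i
    = (C' $ a $ b - C $ a $ b) * equity_value C D p $ b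
      * (self_holding C' i * matrix_inv (mat 1 - C') $ i $ a - (if i = b then 1 else 0))"
  unfolding market_value_component equity_value_single_entry_change[OF assms]
    self_holding_single_entry_change[OF assms(3), of i]
  by (cases "i = b") (simp_all add: algebra_simps)

theorem corollary2:
  fixes C C' :: "real^'n^'n" and D :: "real^'m^'n" and p :: "real^'m"
    and a b :: 'n and \<epsilon> :: real
  assumes "valid_crossholding C" and "valid_crossholding C'"
    and "valid_holdings D"
    and "\<forall>k. 0 \<le> p $ k"
    and "acyclic (crossholding_graph C)" and "acyclic (crossholding_graph C')"
    and "\<forall>i j. (i, j) \<noteq> (a, b) \<longrightarrow> C' $ i $ j = C $ i $ j"
    and "\<bar>C' $ a $ b - C $ a $ b\<bar> \<le> \<epsilon>"
  shows "\<forall>i. \<bar>market_value C' D p $ i - market_value C D p $ i\<bar> \<le> \<epsilon> * norm1 p"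
proof
  fix i
  let ?w = "self_holding C' i * matrix_inv (mat 1 - C') $ i $ a - (if i = b then 1 else 0)"
  have w: "\<bar>?w\<bar> \<le> 1"
    using self_holding_mult_leontief_bounds[OF assms(2,6), of i a] by auto
  have V: "0 \<le> equity_value C D p $ b \<and> equity_value C D p $ b \<le> norm1 p"
    using equity_value_bounds[OF assms(1,5,3,4)] .
  have "\<bar>market_value C' D p $ i - market_value C D p $ i\<bar>
      = \<bar>C' $ a $ b - C $ a $ b\<bar> * equity_value C D p $ b * \<bar>?w\<bar>"
    unfolding market_value_single_entry_change[OF assms(1,2,7)] abs_mult using V by simp
  also have "\<dots> \<le> \<epsilon> * norm1 p * 1"
    using assms(8) V w by (intro mult_mono) auto
  finally show "\<bar>market_value C' D p $ i - market_value C D p $ i\<bar> \<le> \<epsilon> * norm1 p" by simp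
qed

end
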